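(* Let $\mathrm{X}=(X_n)_{n\ge1}$ be a sequence of random variables in $\mathbb{T}$, each distributed according to Lebesgue measure, and let $\mathrm{r}=(r_n)_{n\ge1}$ be a sequence of reals in $(0,1]$. Let $G$ be a nonempty compact subset of $\mathbb{T}$ and $g$ a gauge function with $\mathcal{H}^g(G)>0$. If $\Theta(\mathrm{X},\mathcal{B}(\mathrm{r}))<\infty$ and $\sum_{n}r_n/g(r_n)=\infty$, then almost surely $\mathcal{E}(\mathrm{X},\mathrm{r})\cap G\neq\emptyset$.
   Context: $\mathbb{T}=\mathbb{R}/\mathbb{Z}$ with quotient distance $d$. $\mathcal{E}(\mathrm{X},\mathrm{r})=\{\xi\in\mathbb{T}: d(\xi,X_n)<r_n\text{ for infinitely many }n\}$. A gauge function is a nondecreasing right-continuous function on $[0,\infty)$ vanishing at zero and only at zero; $\mathcal{H}^g$ is the Hausdorff $g$-measure. For a sequence $\mathrm{B}=(B_n)_{n\ge1}$ of Borel subsets of $\mathbb{T}$ of positive Lebesgue measure, $\theta(\mathrm{X},\mathrm{B})=\sup_{n\ge1}\frac{\mathbb{P}(X_1\in B_1,\dots,X_n\in B_n)}{\mathbb{P}(X_1\in B_1)\cdots\mathbb{P}(X_n\in B_n)}$, and for a collection $\mathcal{B}$ of such sequences, $\Theta(\mathrm{X},\mathcal{B})=\sup_{\mathrm{B}\in\mathcal{B}}\theta(\mathrm{X},\mathrm{B})$. Let $q_n=\lceil 1/r_n\rceil$ and, for $0\le k<q_n$, let $I_{n,k}$ be the image of $[k/q_n,(k+1)/q_n)$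 in $\mathbb{T}$; $\mathcal{B}(\mathrm{r})$ is the collection of all sequences $(I_{n,k_n})_{n\ge1}$ with integers $0\le k_n<q_n$. *)

theory Defs
  imports "HOL-Analysis.Analysis" "HOL-Probability.Probability"
begin

text \<open>The circle T = R/Z is represented by the set of representatives [0,1) of reals.
  The quotient distance between representatives x, y is min (frac (x-y)) (frac (y-x)).\<close>

definition torus :: "real set" where
  "torus = {0..<1}"

definition torus_dist :: "real \<Rightarrow> real \<Rightarrow> real" where
  "torus_dist x y = min (frac (x - y)) (frac (y - x))"

definition torus_top :: "real topology" where
  "torus_top = Metric_space.mtopology torus torus_dist"

definition torus_diam :: "real set \<Rightarrow> real" where
  "torus_diam U = (if U = {} then 0 else Sup {torus_dist x y | x y. x \<in> U \<and> y \<in> U})"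

definition gauge_fun :: "(real \<Rightarrow> real) \<Rightarrow> bool" where
  "gauge_fun g \<longleftrightarrow> mono_on {0..} g \<and> (\<forall>t\<ge>0. continuous (at_right t) g)
     \<and> g 0 = 0 \<and> (\<forall>t>0. g t \<noteq> 0)"

definition hausdorff_pre :: "(real \<Rightarrow> real) \<Rightarrow> real \<Rightarrow> real set \<Rightarrow> ennreal" where
  "hausdorff_pre g \<delta> E = (INF U \<in> {U :: nat \<Rightarrow> real set. E \<subseteq> (\<Union>i. U i) \<and>
        (\<forall>i. U i \<subseteq> torus \<and> torus_diam (U i) \<le> \<delta>)}. (\<Sum>i. ennreal (g (torus_diam (U i)))))"

definition hausdorff_measure :: "(real \<Rightarrow> real) \<Rightarrow> real set \<Rightarrow> ennreal" where
  "hausdorff_measure g E = (SUP \<delta> \<in> {0<..}. hausdorff_pre g \<delta> E)"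

definition Eset :: "(nat \<Rightarrow> real) \<Rightarrow> (nat \<Rightarrow> real) \<Rightarrow> real set" where
  "Eset x r = {\<xi> \<in> torus. \<exists>\<^sub>\<infinity>n. torus_dist \<xi> (x n) < r n}"

definition theta :: "'a measure \<Rightarrow> (nat \<Rightarrow> 'a \<Rightarrow> real) \<Rightarrow> (nat \<Rightarrow> real set) \<Rightarrow> ennreal" where
  "theta M X B = (SUP n. ennreal (measure M {\<omega> \<in> space M. \<forall>j\<le>n. X j \<omega> \<in> B j}
                     / (\<Prod>j\<le>n. measure M {\<omega> \<in> space M. X j \<omega> \<in> B j})))"

definition Theta :: "'a measure \<Rightarrow> (nat \<Rightarrow> 'a \<Rightarrow> real) \<Rightarrow> (nat \<Rightarrow> real set) set \<Rightarrow> ennreal" where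
  "Theta M X \<B> = (SUP B \<in> \<B>. theta M X B)"

definition qn :: "(nat \<Rightarrow> real) \<Rightarrow> nat \<Rightarrow> nat" where
  "qn r n = nat \<lceil>1 / r n\<rceil>"

definition Icell :: "(nat \<Rightarrow> real) \<Rightarrow> nat \<Rightarrow> nat \<Rightarrow> real set" where
  "Icell r n k = {real k / real (qn r n) ..< (real k + 1) / real (qn r n)}"

definition Bcal :: "(nat \<Rightarrow> real) \<Rightarrow> (nat \<Rightarrow> real set) set" where
  "Bcal r = {B. \<exists>k :: nat \<Rightarrow> nat. (\<forall>n. k n < qn r n) \<and> (\<forall>n. B n = Icell r n (k n))}"

end

theory Submission
  imports Defs
begin

text \<open>
  Fix \<open>\<delta> > 0\<close> such that the \<open>\<delta>\<close>-approximate Hausdorff content of \<open>G\<close> is positive, and let \<open>S\<close>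
  be the support of this content in \<open>G\<close>. Take a closed grid ball \<open>B\<close> with \<open>S \<inter> B\<close> of positive
  content. The cells of length \<open>1/q\<^sub>n \<approx> r\<^sub>n\<close> that meet \<open>S \<inter> B\<close> cover it, so their number is at least
  a constant times \<open>1/g(r\<^sub>n)\<close>, and the probabilities \<open>p\<^sub>n\<close> that \<open>X\<^sub>n\<close> falls into one of them have
  divergent sum. Since \<open>\<Theta> < \<infinity>\<close>, the probability that \<open>X\<^sub>n\<close> misses them for all \<open>N \<le> n \<le> m\<close> is
  at most \<open>\<Theta> \<Prod>(1 - p\<^sub>n) \<le> \<Theta> exp (- \<Sum> p\<^sub>n) \<rightarrow> 0\<close>; hence almost surely \<open>X\<^sub>n\<close> comes within \<open>r\<^sub>n\<close>
  of every such \<open>S \<inter> B\<close> infinitely often. On this event one builds balls centred in \<open>S\<close>, each inside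
  the previous one and inside \<open>B(X\<^sub>n, r\<^sub>n)\<close> for ever larger \<open>n\<close>; by compactness of \<open>G\<close> their
  centres converge to a point of \<open>G\<close> lying in \<open>\<E>(X, r)\<close>.
\<close>

section \<open>The circle metric\<close>

lemma frac_diff_swap: "frac (y - x) = of_int \<lceil>x - y\<rceil> - (x - y)"
proof -
  have "frac (-(x - y)) = of_int \<lceil>x - y\<rceil> - (x - y)"
    unfolding frac_def floor_minus by simp
  then show ?thesis
    by simp
qed

lemma torus_dist_le_abs_diff_int: "torus_dist x y \<le> \<bar>x - y - of_int k\<bar>"
proof -
  have "k \<le> \<lfloor>x - y\<rfloor> \<or> \<lceil>x - y\<rceil> \<le> k"
    by linarith
  then show ?thesis
    unfolding torus_dist_def frac_diff_swap[where x = x and y = y] unfolding frac_def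
    by (auto simp: min_le_iff_disj)
qed

lemma torus_dist_eq_abs_diff_int: "\<exists>k::int. torus_dist x y = \<bar>x - y - of_int k\<bar>"
proof -
  have "frac (x - y) = \<bar>x - y - of_int \<lfloor>x - y\<rfloor>\<bar>"
    unfolding frac_def by simp
  moreover have "frac (y - x) = \<bar>x - y - of_int \<lceil>x - y\<rceil>\<bar>"
    unfolding frac_diff_swap by simp
  ultimately show ?thesis
    unfolding torus_dist_def by (metis min_def)
qed

lemma torus_dist_le_abs: "torus_dist x y \<le> \<bar>x - y\<bar>"
  using torus_dist_le_abs_diff_int[of x y 0] by simp

lemma torus_dist_nonneg: "0 \<le> torus_dist x y"
  unfolding torus_dist_def by simp

lemma torus_dist_less_1: "torus_dist x y < 1"
  unfolding torus_dist_def using frac_lt_1[of "x - y"] by (simp add: min_less_iff_disj)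

lemma torus_dist_commute: "torus_dist x y = torus_dist y x"
  unfolding torus_dist_def by (simp add: min.commute)

lemma torus_dist_self [simp]: "torus_dist x x = 0"
  unfolding torus_dist_def by simp

lemma torus_dist_triangle: "torus_dist x z \<le> torus_dist x y + torus_dist y z"
proof -
  obtain k l where "torus_dist x y = \<bar>x - y - of_int k\<bar>" "torus_dist y z = \<bar>y - z - of_int l\<bar>"
    using torus_dist_eq_abs_diff_int by metis
  moreover have "torus_dist x z \<le> \<bar>x - z - of_int (k + l)\<bar>"
    by (rule torus_dist_le_abs_diff_int)
  ultimately show ?thesis
    by simp
qed

lemma torus_dist_eq_0_iff:
  assumes "x \<in> torus" "y \<in> torus"
  shows "torus_dist x y = 0 \<longleftrightarrow> x = y"
proof
  assume "torus_dist x y = 0"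
  then obtain k :: int where k: "x - y = of_int k"
    using torus_dist_eq_abs_diff_int[of x y] by force
  have "\<bar>x - y\<bar> < 1"
    using assms unfolding torus_def by auto
  then have "k = 0"
    unfolding k by linarith
  then show "x = y"
    using k by simp
qed simp

interpretation torus: Metric_space torus torus_dist
  by unfold_locales
    (auto simp: torus_dist_nonneg torus_dist_commute torus_dist_eq_0_iff torus_dist_triangle)

lemma torus_grid_approx:
  assumes "y \<in> torus"
  shows "\<exists>j::nat. real j / real (Suc m) \<in> torus \<and>
    torus_dist (real j / real (Suc m)) y < 1 / real (Suc m)"
proof -
  define q where "q = real (Suc m)"
  define j where "j = nat \<lfloor>y * q\<rfloor>"
  have y: "0 \<le> y" "y < 1"
    using assms unfolding torus_def by auto
  then have "real j = of_int \<lfloor>y * q\<rfloor>"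
    unfolding j_def q_def by simp
  moreover have "y * q < q"
    using y by (simp add: q_def)
  ultimately have "real j \<le> y * q" "y * q < real j + 1" "real j < q"
    by linarith+
  then have "real j / q \<le> y" "y < real j / q + 1 / q" "real j / q < 1"
    using y by (simp_all add: q_def field_simps)
  then show ?thesis
    using torus_dist_le_abs[of "real j / q" y] unfolding q_def torus_def by force
qed

lemma torus_grid_ball_between:
  assumes "y \<in> torus" "0 < \<rho>"
  obtains m j :: nat where "y \<in> torus.mball (real j / real (Suc m)) (2 / real (Suc m))"
    and "torus.mball (real j / real (Suc m)) (2 / real (Suc m)) \<subseteq> torus.mball y \<rho>"
proof -
  obtain m where m: "inverse (real (Suc m)) < \<rho> / 3"
    using reals_Archimedean[of "\<rho> / 3"] assms(2) by auto
  obtain j where c: "real j / real (Suc m) \<in> torus"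
    and cy: "torus_dist (real j / real (Suc m)) y < 1 / real (Suc m)"
    using torus_grid_approx[OF assms(1)] by blast
  have "y \<in> torus.mball (real j / real (Suc m)) (2 / real (Suc m))"
    using assms(1) c cy divide_strict_right_mono[of 1 2 "real (Suc m)"] by simp
  moreover have "torus.mball (real j / real (Suc m)) (2 / real (Suc m)) \<subseteq> torus.mball y \<rho>"
    using cy m assms(1) by (intro torus.mball_subset) (simp_all add: field_simps)
  ultimately show ?thesis
    using that by blast
qed

section \<open>Hausdorff content and its support\<close>

lemma gauge_fun_nonneg: "gauge_fun g \<Longrightarrow> 0 \<le> t \<Longrightarrow> 0 \<le> g t"
  unfolding gauge_fun_def mono_on_def by (metis atLeast_iff order_refl)

lemma gauge_fun_mono: "gauge_fun g \<Longrightarrow> 0 \<le> s \<Longrightarrow> s \<le> t \<Longrightarrow> g s \<le> g t"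
  unfolding gauge_fun_def mono_on_def by (meson atLeast_iff order_trans)

lemma gauge_fun_pos: "gauge_fun g \<Longrightarrow> 0 < t \<Longrightarrow> 0 < g t"
  using gauge_fun_nonneg[of g t] unfolding gauge_fun_def by force

lemma torus_diam_nonneg: "0 \<le> torus_diam U"
proof (cases "U = {}")
  case False
  then obtain x where "x \<in> U"
    by blast
  moreover have "bdd_above {torus_dist x y | x y. x \<in> U \<and> y \<in> U}"
    by (rule bdd_aboveI[of _ 1]) (auto intro: less_imp_le torus_dist_less_1)
  ultimately have "torus_dist x x \<le> Sup {torus_dist x y | x y. x \<in> U \<and> y \<in> U}"
    by (intro cSup_upper) blast+
  then show ?thesis
    using False unfolding torus_diam_def by simp
qed (simp add: torus_diam_def)

lemma torus_diam_le:
  assumes "0 \<le> c" "\<And>x y. x \<in> U \<Longrightarrow> y \<in> U \<Longrightarrow> torus_dist x y \<le> c"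
  shows "torus_diam U \<le> c"
proof (cases "U = {}")
  case False
  then have "Sup {torus_dist x y | x y. x \<in> U \<and> y \<in> U} \<le> c"
    by (intro cSup_least) (use assms in blast)+
  then show ?thesis
    using False unfolding torus_diam_def by simp
qed (simp add: torus_diam_def assms)

lemma hausdorff_pre_le_cover:
  assumes "E \<subseteq> (\<Union>i. U i)" "\<And>i. U i \<subseteq> torus" "\<And>i. torus_diam (U i) \<le> \<delta>"
  shows "hausdorff_pre g \<delta> E \<le> (\<Sum>i. ennreal (g (torus_diam (U i))))"
  unfolding hausdorff_pre_def by (rule INF_lower) (use assms in blast)

lemma hausdorff_pre_mono: "A \<subseteq> B \<Longrightarrow> hausdorff_pre g \<delta> A \<le> hausdorff_pre g \<delta> B"
  unfolding hausdorff_pre_def by (rule INF_superset_mono) auto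

lemma hausdorff_pre_empty [simp]:
  assumes "gauge_fun g" "0 \<le> \<delta>"
  shows "hausdorff_pre g \<delta> {} = 0"
proof -
  have "hausdorff_pre g \<delta> {} \<le> (\<Sum>i. ennreal (g (torus_diam {})))"
    by (rule hausdorff_pre_le_cover) (auto simp: torus_diam_def assms)
  also have "\<dots> = 0"
    using assms unfolding torus_diam_def gauge_fun_def by simp
  finally show ?thesis
    by simp
qed

lemma hausdorff_pre_countable_subadditive:
  fixes E :: "nat \<Rightarrow> real set"
  shows "hausdorff_pre g \<delta> (\<Union>i. E i) \<le> (\<Sum>i. hausdorff_pre g \<delta> (E i))"
proof (rule ennreal_le_epsilon)
  fix e :: real
  assume fin: "(\<Sum>i. hausdorff_pre g \<delta> (E i)) < top" and "0 < e"
  define cost where "cost U = (\<Sum>i. ennreal (g (torus_diam (U i))))" for U :: "nat \<Rightarrow> real set"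
  define e' where "e' i = e * (1/2) ^ Suc i" for i
  have "\<exists>U. E i \<subseteq> (\<Union>j. U j) \<and> (\<forall>j. U j \<subseteq> torus \<and> torus_diam (U j) \<le> \<delta>) \<and>
            cost U < hausdorff_pre g \<delta> (E i) + ennreal (e' i)" for i
  proof -
    have "hausdorff_pre g \<delta> (E i) < top"
      using fin ennreal_suminf_lessD by blast
    moreover have "0 < e' i"
      using \<open>0 < e\<close> by (simp add: e'_def)
    ultimately have "hausdorff_pre g \<delta> (E i) < hausdorff_pre g \<delta> (E i) + ennreal (e' i)"
      by (cases "hausdorff_pre g \<delta> (E i)") (auto simp: ennreal_less_iff simp flip: ennreal_plus)
    then show ?thesis
      unfolding hausdorff_pre_def cost_def INF_less_iff by blast
  qed
  then obtain U where cover: "\<And>i. E i \<subseteq> (\<Union>j. U i j)"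
    and U: "\<And>i j. U i j \<subseteq> torus" "\<And>i j. torus_diam (U i j) \<le> \<delta>"
    and cost: "\<And>i. cost (U i) < hausdorff_pre g \<delta> (E i) + ennreal (e' i)"
    by metis
  define W where "W k = (case prod_decode k of (i, j) \<Rightarrow> U i j)" for k
  have "(\<Union>i. E i) \<subseteq> (\<Union>k. W k)"
  proof
    fix x assume "x \<in> (\<Union>i. E i)"
    then obtain i j where "x \<in> U i j"
      using cover by blast
    then have "x \<in> W (prod_encode (i, j))"
      unfolding W_def by simp
    then show "x \<in> (\<Union>k. W k)"
      by blast
  qed
  then have "hausdorff_pre g \<delta> (\<Union>i. E i) \<le> (\<Sum>k. ennreal (g (torus_diam (W k))))"
    by (rule hausdorff_pre_le_cover) (use U in \<open>auto simp: W_def split: prod.splits\<close>)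
  also have "\<dots> = (\<Sum>i. cost (U i))"
    unfolding W_def cost_def case_prod_unfold by (rule suminf_ennreal_2dimen) simp
  also have "\<dots> \<le> (\<Sum>i. hausdorff_pre g \<delta> (E i) + ennreal (e' i))"
    by (rule suminf_le) (use cost less_imp_le in auto)
  also have "\<dots> = (\<Sum>i. hausdorff_pre g \<delta> (E i)) + (\<Sum>i. ennreal (e' i))"
    by (rule suminf_add[symmetric]) auto
  also have "(\<Sum>i. ennreal (e' i)) = ennreal e"
  proof -
    have "e' sums (e * 1)"
      unfolding e'_def by (intro sums_mult power_half_series)
    then show ?thesis
      using \<open>0 < e\<close> by (subst suminf_ennreal2) (auto simp: sums_iff e'_def)
  qed
  finally show "hausdorff_pre g \<delta> (\<Union>i. E i) \<le> (\<Sum>i. hausdorff_pre g \<delta> (E i)) + ennreal e" .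
qed

lemma hausdorff_pre_null_Union:
  fixes E :: "nat \<Rightarrow> real set"
  assumes "\<And>i. hausdorff_pre g \<delta> (E i) = 0"
  shows "hausdorff_pre g \<delta> (\<Union>i. E i) = 0"
  using hausdorff_pre_countable_subadditive[of g \<delta> E] assms by simp

lemma hausdorff_pre_Un_le:
  assumes "gauge_fun g" "0 \<le> \<delta>"
  shows "hausdorff_pre g \<delta> (A \<union> B) \<le> hausdorff_pre g \<delta> A + hausdorff_pre g \<delta> B"
proof -
  define E where "E i = (if i = 0 then A else if i = 1 then B else {})" for i :: nat
  have "A \<union> B = (\<Union>i. E i)"
    unfolding E_def by (auto split: if_splits)
  then have "hausdorff_pre g \<delta> (A \<union> B) \<le> (\<Sum>i. hausdorff_pre g \<delta> (E i))"
    using hausdorff_pre_countable_subadditive by metis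
  also have "\<dots> = (\<Sum>i\<in>{0, 1}. hausdorff_pre g \<delta> (E i))"
    by (rule suminf_finite) (auto simp: E_def assms)
  also have "\<dots> = hausdorff_pre g \<delta> A + hausdorff_pre g \<delta> B"
    by (simp add: E_def)
  finally show ?thesis .
qed

definition hausdorff_support :: "(real \<Rightarrow> real) \<Rightarrow> real \<Rightarrow> real set \<Rightarrow> real set" where
  "hausdorff_support g \<delta> G = {y \<in> G. \<forall>\<rho>>0. 0 < hausdorff_pre g \<delta> (G \<inter> torus.mball y \<rho>)}"

lemma hausdorff_pre_diff_support:
  assumes g: "gauge_fun g" and "0 \<le> \<delta>" and "G \<subseteq> torus"
  shows "hausdorff_pre g \<delta> (G - hausdorff_support g \<delta> G) = 0"
proof -
  define B where "B i = (case prod_decode i of (m, j) \<Rightarrow>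
    G \<inter> torus.mball (real j / real (Suc m)) (2 / real (Suc m)))" for i
  define N where "N i = (if hausdorff_pre g \<delta> (B i) = 0 then B i else {})" for i
  have "G - hausdorff_support g \<delta> G \<subseteq> (\<Union>i. N i)"
  proof
    fix y assume y: "y \<in> G - hausdorff_support g \<delta> G"
    then obtain \<rho> where "0 < \<rho>" and null: "hausdorff_pre g \<delta> (G \<inter> torus.mball y \<rho>) = 0"
      unfolding hausdorff_support_def by auto
    have "y \<in> torus"
      using y assms by auto
    then obtain m j where "y \<in> torus.mball (real j / real (Suc m)) (2 / real (Suc m))"
      and "torus.mball (real j / real (Suc m)) (2 / real (Suc m)) \<subseteq> torus.mball y \<rho>"
      using \<open>0 < \<rho>\<close> by (rule torus_grid_ball_between)
    then have "y \<in> B (prod_encode (m, j))" "B (prod_encode (m, j)) \<subseteq> G \<inter> torus.mball y \<rho>"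
      using y unfolding B_def by auto
    then have "y \<in> N (prod_encode (m, j))"
      using null hausdorff_pre_mono unfolding N_def by (metis le_zero_eq)
    then show "y \<in> (\<Union>i. N i)"
      by blast
  qed
  moreover have "hausdorff_pre g \<delta> (\<Union>i. N i) = 0"
    by (rule hausdorff_pre_null_Union) (simp add: N_def g \<open>0 \<le> \<delta>\<close>)
  ultimately show ?thesis
    using hausdorff_pre_mono by (metis le_zero_eq)
qed

lemma hausdorff_pre_le_inter_support:
  assumes "gauge_fun g" "0 \<le> \<delta>" "G \<subseteq> torus" "A \<subseteq> G"
  shows "hausdorff_pre g \<delta> A \<le> hausdorff_pre g \<delta> (A \<inter> hausdorff_support g \<delta> G)"
proof -
  define S where "S = hausdorff_support g \<delta> G"
  have "hausdorff_pre g \<delta> A \<le> hausdorff_pre g \<delta> ((A \<inter> S) \<union> (G - S))"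
    by (rule hausdorff_pre_mono) (use assms(4) in blast)
  also have "\<dots> \<le> hausdorff_pre g \<delta> (A \<inter> S)"
    using hausdorff_pre_Un_le[OF assms(1,2)] hausdorff_pre_diff_support[OF assms(1-3)]
    unfolding S_def by (metis add_0_right)
  finally show ?thesis
    by (simp only: S_def)
qed

section \<open>Grid cells\<close>

lemma qn_pos:
  assumes "0 < r n" "r n \<le> 1"
  shows "0 < qn r n"
  using assms unfolding qn_def by (simp add: field_simps)

lemma inverse_qn_le:
  assumes "0 < r n" "r n \<le> 1"
  shows "1 / real (qn r n) \<le> r n"
proof -
  have "1 / r n \<le> real (qn r n)"
    using assms unfolding qn_def by (simp add: field_simps)
  then show ?thesis
    using assms qn_pos[of r n] by (simp add: field_simps)
qed

lemma half_le_inverse_qn: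
  assumes "0 < r n" "r n \<le> 1"
  shows "r n / 2 \<le> 1 / real (qn r n)"
proof -
  have "real (qn r n) = of_int \<lceil>1 / r n\<rceil>"
    using assms unfolding qn_def by simp
  also have "\<dots> < 1 / r n + 1"
    using ceiling_correct[of "1 / r n"] by linarith
  also have "\<dots> \<le> 2 / r n"
    using assms by (simp add: field_simps)
  finally show ?thesis
    using assms qn_pos[of r n] by (simp add: field_simps)
qed

lemma Icell_subset_torus: "k < qn r n \<Longrightarrow> Icell r n k \<subseteq> torus"
  unfolding Icell_def torus_def by (auto simp: field_simps)

lemma torus_dist_Icell_less:
  assumes "x \<in> Icell r n k" "y \<in> Icell r n k"
  shows "torus_dist x y < 1 / real (qn r n)"
proof -
  have "\<bar>x - y\<bar> < 1 / real (qn r n)"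
    using assms unfolding Icell_def by (auto simp: add_divide_distrib)
  then show ?thesis
    using torus_dist_le_abs[of x y] by linarith
qed

lemma Icell_disjoint:
  assumes "k \<noteq> l" "0 < qn r n"
  shows "Icell r n k \<inter> Icell r n l = {}"
proof -
  have "real k < real l + 1 \<and> real l < real k + 1" if "x \<in> Icell r n k" "x \<in> Icell r n l" for x
    using that assms(2) unfolding Icell_def by (auto simp: field_simps)
  then show ?thesis
    using assms(1) by fastforce
qed

lemma Icell_cover:
  assumes "x \<in> torus" "0 < qn r n"
  obtains k where "k < qn r n" "x \<in> Icell r n k"
proof -
  define q where "q = real (qn r n)"
  define k where "k = nat \<lfloor>x * q\<rfloor>"
  have x: "0 \<le> x" "x < 1" and "0 < q"
    using assms unfolding torus_def q_def by auto
  then have "real k = of_int \<lfloor>x * q\<rfloor>"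
    unfolding k_def by simp
  moreover have "x * q < q"
    using x \<open>0 < q\<close> by simp
  ultimately have "real k \<le> x * q" "x * q < real k + 1" "real k < q"
    by linarith+
  then show ?thesis
    using that \<open>0 < q\<close> unfolding Icell_def q_def by (simp add: field_simps)
qed

lemma measure_Icell: "0 < qn r n \<Longrightarrow> measure lborel (Icell r n k) = 1 / real (qn r n)"
  unfolding Icell_def by (simp add: divide_right_mono diff_divide_distrib[symmetric])

lemma Icell_borel [measurable]: "Icell r n k \<in> sets borel"
  unfolding Icell_def by simp

lemma Union_Icell_borel [measurable]: "(\<Union>k\<in>T. Icell r n k) \<in> sets borel"
  by auto

definition cells_meeting :: "(nat \<Rightarrow> real) \<Rightarrow> nat \<Rightarrow> real set \<Rightarrow> nat set" where
  "cells_meeting r n K = {k. k < qn r n \<and> Icell r n k \<inter> K \<noteq> {}}"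

lemma card_cells_meeting_pos:
  assumes "K \<subseteq> torus" "K \<noteq> {}" "0 < qn r n"
  shows "0 < card (cells_meeting r n K)"
proof -
  obtain z where "z \<in> K"
    using assms(2) by blast
  then obtain k where "k < qn r n" "z \<in> Icell r n k"
    using Icell_cover assms(1,3) by blast
  then have "k \<in> cells_meeting r n K"
    unfolding cells_meeting_def using \<open>z \<in> K\<close> by blast
  then show ?thesis
    unfolding cells_meeting_def by (auto simp: card_gt_0_iff)
qed

lemma hausdorff_pre_le_card_cells_meeting:
  assumes g: "gauge_fun g" and K: "K \<subseteq> torus" and "0 < qn r n" and "1 / real (qn r n) \<le> \<delta>"
  shows "hausdorff_pre g \<delta> K \<le> ennreal (real (card (cells_meeting r n K)) * g (1 / real (qn r n)))"
proof -
  define S where "S = cells_meeting r n K"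
  define U where "U k = (if k \<in> S then Icell r n k else {})" for k
  have "finite S"
    unfolding S_def cells_meeting_def by simp
  have "K \<subseteq> (\<Union>k. U k)"
  proof
    fix x assume "x \<in> K"
    moreover obtain k where "k < qn r n" "x \<in> Icell r n k"
      using Icell_cover K \<open>x \<in> K\<close> \<open>0 < qn r n\<close> by blast
    ultimately have "x \<in> U k"
      unfolding U_def S_def cells_meeting_def by auto
    then show "x \<in> (\<Union>k. U k)"
      by blast
  qed
  moreover have "U k \<subseteq> torus" for k
    unfolding U_def S_def cells_meeting_def using Icell_subset_torus by auto
  moreover have diam: "torus_diam (U k) \<le> 1 / real (qn r n)" for k
    by (rule torus_diam_le)
      (auto simp: U_def split: if_splits intro: less_imp_le torus_dist_Icell_less)
  ultimately have "hausdorff_pre g \<delta> K \<le> (\<Sum>k. ennreal (g (torus_diam (U k))))"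
    using assms(4) order_trans by (intro hausdorff_pre_le_cover) blast+
  also have "\<dots> = (\<Sum>k\<in>S. ennreal (g (torus_diam (U k))))"
    by (rule suminf_finite[OF \<open>finite S\<close>]) (use g in \<open>simp add: U_def torus_diam_def gauge_fun_def\<close>)
  also have "\<dots> \<le> (\<Sum>k\<in>S. ennreal (g (1 / real (qn r n))))"
    using diam by (intro sum_mono ennreal_leI gauge_fun_mono[OF g torus_diam_nonneg])
  also have "\<dots> = ennreal (real (card S) * g (1 / real (qn r n)))"
    using gauge_fun_nonneg[OF g, of "1 / real (qn r n)"]
    by (simp add: ennreal_mult ennreal_of_nat_eq_real_of_nat)
  finally show ?thesis
    by (simp only: S_def)
qed

text \<open>If \<open>1/q\<^sub>n \<le> \<delta>\<close> the cells meeting \<open>K\<close> form a \<open>\<delta>\<close>-cover of \<open>K\<close>; otherwise \<open>r\<^sub>n \<ge> \<delta>\<close> and a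
  single cell already gives the bound.\<close>

lemma card_cells_meeting_lower_bound:
  assumes g: "gauge_fun g" and "0 < \<delta>" and K: "K \<subseteq> torus" "K \<noteq> {}"
    and c: "0 < c" "ennreal c \<le> hausdorff_pre g \<delta> K" and r: "0 < r n" "r n \<le> 1"
  shows "min c (g \<delta>) / 2 * (r n / g (r n)) \<le> real (card (cells_meeting r n K)) / real (qn r n)"
proof -
  have q: "0 < qn r n"
    using qn_pos[of r n] r by blast
  have "0 < g (r n)"
    using gauge_fun_pos g r(1) by blast
  have half: "r n / 2 \<le> 1 / real (qn r n)"
    using half_le_inverse_qn[of r n] r by blast
  have inv: "1 / real (qn r n) \<le> r n"
    using inverse_qn_le[of r n] r by blast
  show ?thesis
  proof (cases "1 / real (qn r n) \<le> \<delta>")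
    case True
    have "ennreal c \<le> ennreal (real (card (cells_meeting r n K)) * g (1 / real (qn r n)))"
      using c(2) hausdorff_pre_le_card_cells_meeting[OF g K(1) q True] by (rule order_trans)
    then have "c \<le> real (card (cells_meeting r n K)) * g (1 / real (qn r n))"
      using c(1) by (simp add: ennreal_le_iff2)
    also have "\<dots> \<le> real (card (cells_meeting r n K)) * g (r n)"
      using gauge_fun_mono[OF g _ inv] by (intro mult_left_mono) auto
    finally have "c / g (r n) \<le> real (card (cells_meeting r n K))"
      using \<open>0 < g (r n)\<close> by (simp add: field_simps)
    then have "c / g (r n) * (r n / 2) \<le> real (card (cells_meeting r n K)) * (1 / real (qn r n))"
      using half \<open>0 < g (r n)\<close> c r by (intro mult_mono) auto
    moreover have "min c (g \<delta>) / 2 * (r n / g (r n)) \<le> c / g (r n) * (r n / 2)"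
      using \<open>0 < g (r n)\<close> r c by (simp add: field_simps min_le_iff_disj)
    ultimately show ?thesis
      by simp
  next
    case False
    then have "g \<delta> \<le> g (r n)"
      using gauge_fun_mono[OF g] \<open>0 < \<delta>\<close> inv by simp
    then have "min c (g \<delta>) / 2 * (r n / g (r n)) \<le> g (r n) / 2 * (r n / g (r n))"
      using r \<open>0 < g (r n)\<close> by (intro mult_right_mono) auto
    also have "\<dots> = r n / 2"
      using \<open>0 < g (r n)\<close> by simp
    also have "\<dots> \<le> 1 / real (qn r n)"
      by (rule half)
    also have "\<dots> \<le> real (card (cells_meeting r n K)) / real (qn r n)"
      using card_cells_meeting_pos[OF K q] by (simp add: divide_right_mono)
    finally show ?thesis .
  qed
qed

section \<open>Divergence of cell densities\<close>

lemma ennreal_pos_obtain_real_le: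
  assumes "0 < x"
  obtains c where "0 < c" "ennreal c \<le> x"
proof (cases "x = \<infinity>")
  case False
  then show ?thesis
    using that[of "enn2real x"] assms by (simp add: enn2real_positive_iff less_top)
qed (use that[of 1] in simp)

lemma not_summable_card_cells_meeting:
  assumes g: "gauge_fun g" and "0 < \<delta>" and K: "K \<subseteq> torus" and pos: "0 < hausdorff_pre g \<delta> K"
    and r_pos: "\<And>n. 0 < r n" and r_le_1: "\<And>n. r n \<le> 1"
    and diverge: "(\<Sum>n. ennreal (r n / g (r n))) = \<infinity>"
  shows "\<not> summable (\<lambda>n. real (card (cells_meeting r n K)) / real (qn r n))"
proof -
  obtain c where c: "0 < c" "ennreal c \<le> hausdorff_pre g \<delta> K"
    using pos by (rule ennreal_pos_obtain_real_le)
  have "K \<noteq> {}"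
    using pos \<open>0 < \<delta>\<close> g by auto
  define a where "a = min c (g \<delta>) / 2"
  have "0 < a"
    unfolding a_def using c gauge_fun_pos[OF g \<open>0 < \<delta>\<close>] by simp
  have nonneg: "0 \<le> r n / g (r n)" for n
    using gauge_fun_nonneg[OF g] r_pos[of n] by simp
  have "\<not> summable (\<lambda>n. r n / g (r n))"
  proof
    assume summable: "summable (\<lambda>n. r n / g (r n))"
    have "(\<Sum>n. ennreal (r n / g (r n))) \<noteq> \<infinity>"
      using ennreal_suminf_neq_top[OF summable nonneg] by simp
    then show False
      using diverge by simp
  qed
  then have not_summable: "\<not> summable (\<lambda>n. a * (r n / g (r n)))"
    using \<open>0 < a\<close> by (simp only: summable_cmult_iff) simp
  have lower: "norm (a * (r n / g (r n))) \<le> real (card (cells_meeting r n K)) / real (qn r n)" for n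
  proof -
    have "0 \<le> a * (r n / g (r n))"
      using \<open>0 < a\<close> nonneg[of n] by (intro mult_nonneg_nonneg) auto
    moreover have "a * (r n / g (r n)) \<le> real (card (cells_meeting r n K)) / real (qn r n)"
      unfolding a_def
      using card_cells_meeting_lower_bound[of g \<delta> K c r n] g \<open>0 < \<delta>\<close> K \<open>K \<noteq> {}\<close> c
        r_pos[of n] r_le_1[of n]
      by blast
    ultimately show ?thesis
      by (simp only: real_norm_def abs_of_nonneg)
  qed
  show ?thesis
  proof
    assume "summable (\<lambda>n. real (card (cells_meeting r n K)) / real (qn r n))"
    then have "summable (\<lambda>n. a * (r n / g (r n)))"
      by (rule summable_comparison_test'[where N = 0]) (rule lower)
    with not_summable show False ..
  qed
qed

section \<open>Probability estimates\<close>

lemma not_summable_nonneg_imp_sum_at_top: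
  fixes f :: "nat \<Rightarrow> real"
  assumes "\<And>n. 0 \<le> f n" "\<not> summable f"
  shows "filterlim (\<lambda>m. \<Sum>n\<le>m. f n) at_top sequentially"
  unfolding filterlim_at_top
proof
  fix B :: real
  obtain m where "B < (\<Sum>n<m. f n)"
    using assms summableI_nonneg_bounded[of f B] by (meson not_less)
  moreover have "(\<Sum>n<m. f n) \<le> (\<Sum>n\<le>m'. f n)" if "m \<le> m'" for m'
    using that assms(1) by (intro sum_mono2) auto
  ultimately show "eventually (\<lambda>m. B \<le> (\<Sum>n\<le>m. f n)) sequentially"
    unfolding eventually_sequentially by (meson less_imp_le order_trans)
qed

lemma prod_one_minus_le_exp_neg_sum:
  fixes p :: "'a \<Rightarrow> real"
  assumes "\<And>i. i \<in> I \<Longrightarrow> p i \<le> 1"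
  shows "(\<Prod>i\<in>I. 1 - p i) \<le> exp (- (\<Sum>i\<in>I. p i))"
proof -
  have "(\<Prod>i\<in>I. 1 - p i) \<le> (\<Prod>i\<in>I. exp (- p i))"
  proof (rule prod_mono)
    fix i assume "i \<in> I"
    then show "0 \<le> 1 - p i \<and> 1 - p i \<le> exp (- p i)"
      using assms exp_ge_add_one_self[of "- p i"] by simp
  qed
  also have "\<dots> = exp (- (\<Sum>i\<in>I. p i))"
    by (cases "finite I") (simp_all add: exp_sum flip: sum_negf)
  finally show ?thesis .
qed

lemma all_in_Union_eq_Union_PiE:
  "{\<omega> \<in> \<Omega>. \<forall>j\<le>n. f j \<omega> \<in> (\<Union>k\<in>S j. A j k)} =
     (\<Union>k\<in>PiE {..n} S. {\<omega> \<in> \<Omega>. \<forall>j\<le>n. f j \<omega> \<in> A j (k j)})"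
proof (intro equalityI subsetI)
  fix \<omega> assume "\<omega> \<in> {\<omega> \<in> \<Omega>. \<forall>j\<le>n. f j \<omega> \<in> (\<Union>k\<in>S j. A j k)}"
  then have \<omega>: "\<omega> \<in> \<Omega>" and "\<forall>j\<in>{..n}. \<exists>k. k \<in> S j \<and> f j \<omega> \<in> A j k"
    by auto
  then obtain k where "\<And>j. j \<le> n \<Longrightarrow> k j \<in> S j \<and> f j \<omega> \<in> A j (k j)"
    by (metis atMost_iff)
  then have "restrict k {..n} \<in> PiE {..n} S" "\<omega> \<in> {\<omega> \<in> \<Omega>. \<forall>j\<le>n. f j \<omega> \<in> A j (restrict k {..n} j)}"
    using \<omega> by auto
  then show "\<omega> \<in> (\<Union>k\<in>PiE {..n} S. {\<omega> \<in> \<Omega>. \<forall>j\<le>n. f j \<omega> \<in> A j (k j)})"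
    by blast
qed (auto simp: PiE_def Pi_def)

locale uniform_torus_sequence = prob_space M for M :: "'a measure" +
  fixes X :: "nat \<Rightarrow> 'a \<Rightarrow> real" and r :: "nat \<Rightarrow> real"
  assumes X_measurable [measurable]: "\<And>n. X n \<in> borel_measurable M"
    and X_in_torus: "\<And>n \<omega>. \<omega> \<in> space M \<Longrightarrow> X n \<omega> \<in> torus"
    and X_distr: "\<And>n. distr M lborel (X n) = uniform_measure lborel torus"
    and r_pos: "\<And>n. 0 < r n" and r_le_1: "\<And>n. r n \<le> 1"
    and Theta_finite: "Theta M X (Bcal r) < \<infinity>"
begin

lemma qn_gt_0: "0 < qn r n"
  using qn_pos r_pos r_le_1 by blast

lemma prob_X_in:
  assumes "A \<in> sets borel"
  shows "prob {\<omega> \<in> space M. X n \<omega> \<in> A} = measure lborel (torus \<inter> A)"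
proof -
  have torus: "emeasure lborel torus = 1"
    unfolding torus_def by simp
  have "{\<omega> \<in> space M. X n \<omega> \<in> A} = X n -` A \<inter> space M"
    by auto
  then have "prob {\<omega> \<in> space M. X n \<omega> \<in> A} = measure (distr M lborel (X n)) A"
    using assms by (simp add: measure_distr)
  also have "\<dots> = measure lborel (torus \<inter> A) / measure lborel torus"
    unfolding X_distr using assms torus by (intro measure_uniform_measure) auto
  finally show ?thesis
    using torus by (simp add: measure_def)
qed

lemma prob_X_in_Icell: "k < qn r n \<Longrightarrow> prob {\<omega> \<in> space M. X n \<omega> \<in> Icell r n k} = 1 / real (qn r n)"
  using prob_X_in[of "Icell r n k" n] measure_Icell[OF qn_gt_0] Icell_subset_torus
  by (simp add: Int_absorb1)

definition Theta_real :: real where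
  "Theta_real = enn2real (Theta M X (Bcal r))"

lemma Theta_eq_Theta_real: "Theta M X (Bcal r) = ennreal Theta_real"
  unfolding Theta_real_def using Theta_finite by simp

lemma Theta_real_nonneg: "0 \<le> Theta_real"
  unfolding Theta_real_def by simp

text \<open>This is where \<open>\<Theta>(X, \<B>(r)) < \<infinity>\<close> enters: it replaces independence of the \<open>X\<^sub>j\<close>.\<close>

lemma prob_all_in_cells_le:
  assumes k: "\<And>j. j \<le> n \<Longrightarrow> k j < qn r j"
  shows "prob {\<omega> \<in> space M. \<forall>j\<le>n. X j \<omega> \<in> Icell r j (k j)} \<le> Theta_real * (\<Prod>j\<le>n. 1 / real (qn r j))"
proof -
  define B where "B j = Icell r j (if j \<le> n then k j else 0)" for j
  have "B \<in> Bcal r"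
    unfolding Bcal_def B_def using k qn_gt_0
    by (intro CollectI exI[of _ "\<lambda>j. if j \<le> n then k j else 0"]) auto
  define P where "P = (\<Prod>j\<le>n. 1 / real (qn r j))"
  have P: "(\<Prod>j\<le>n. prob {\<omega> \<in> space M. X j \<omega> \<in> B j}) = P"
    unfolding P_def B_def using k by (intro prod.cong) (auto simp: prob_X_in_Icell)
  have "0 < P"
    unfolding P_def using qn_gt_0 by (intro prod_pos) auto
  define A where "A = prob {\<omega> \<in> space M. \<forall>j\<le>n. X j \<omega> \<in> Icell r j (k j)}"
  have "{\<omega> \<in> space M. \<forall>j\<le>n. X j \<omega> \<in> B j} = {\<omega> \<in> space M. \<forall>j\<le>n. X j \<omega> \<in> Icell r j (k j)}"
    unfolding B_def by auto
  then have "ennreal (A / P) \<le> theta M X B"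
    unfolding theta_def A_def P[symmetric] by (intro SUP_upper2[of n]) auto
  also have "\<dots> \<le> Theta M X (Bcal r)"
    unfolding Theta_def using \<open>B \<in> Bcal r\<close> by (rule SUP_upper)
  finally have "A / P \<le> Theta_real"
    unfolding Theta_eq_Theta_real using Theta_real_nonneg by simp
  then show ?thesis
    using \<open>0 < P\<close> unfolding A_def P_def by (simp add: field_simps)
qed

lemma prob_all_in_cell_unions_le:
  assumes S: "\<And>j. S j \<subseteq> {..<qn r j}"
  shows "prob {\<omega> \<in> space M. \<forall>j\<le>n. X j \<omega> \<in> (\<Union>k\<in>S j. Icell r j k)}
     \<le> Theta_real * (\<Prod>j\<le>n. real (card (S j)) / real (qn r j))"
proof -
  define A where "A k = {\<omega> \<in> space M. \<forall>j\<le>n. X j \<omega> \<in> Icell r j (k j)}" for k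
  have "finite (S j)" for j
    using S finite_subset by blast
  then have fin: "finite (PiE {..n} S)"
    by (intro finite_PiE) auto
  have disjoint: "disjoint_family_on A (PiE {..n} S)"
    unfolding disjoint_family_on_def
  proof (intro ballI impI)
    fix k l assume "k \<in> PiE {..n} S" "l \<in> PiE {..n} S" "k \<noteq> l"
    then obtain j where "j \<le> n" "k j \<noteq> l j"
      using PiE_ext by (metis atMost_iff)
    then show "A k \<inter> A l = {}"
      unfolding A_def using Icell_disjoint[OF _ qn_gt_0] by blast
  qed
  have "prob (\<Union>k\<in>PiE {..n} S. A k) = (\<Sum>k\<in>PiE {..n} S. prob (A k))"
    by (rule finite_measure_finite_Union[OF fin _ disjoint]) (auto simp: A_def)
  also have "\<dots> \<le> (\<Sum>k\<in>PiE {..n} S. Theta_real * (\<Prod>j\<le>n. 1 / real (qn r j)))"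
    unfolding A_def using S by (intro sum_mono prob_all_in_cells_le) (auto simp: PiE_def Pi_def)
  also have "\<dots> = Theta_real * ((\<Prod>j\<le>n. real (card (S j))) * (\<Prod>j\<le>n. 1 / real (qn r j)))"
    by (simp add: card_PiE)
  also have "\<dots> = Theta_real * (\<Prod>j\<le>n. real (card (S j)) / real (qn r j))"
    by (simp flip: prod.distrib)
  finally show ?thesis
    unfolding A_def all_in_Union_eq_Union_PiE .
qed

lemma prob_avoid_cell_unions_le:
  fixes N m :: nat
  assumes S: "\<And>j. S j \<subseteq> {..<qn r j}"
  defines "p \<equiv> \<lambda>j. if N \<le> j then real (card (S j)) / real (qn r j) else 0"
  shows "prob {\<omega> \<in> space M. \<forall>j\<ge>N. X j \<omega> \<notin> (\<Union>k\<in>S j. Icell r j k)}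
    \<le> Theta_real * exp (- (\<Sum>j\<le>m. p j))"
proof -
  define S' where "S' j = (if N \<le> j then {..<qn r j} - S j else {..<qn r j})" for j
  have card_S: "card (S j) \<le> qn r j" for j
    using S[of j] card_mono by (metis card_lessThan finite_lessThan)
  have ratio: "real (card (S' j)) / real (qn r j) = 1 - p j" for j
  proof -
    have "card ({..<qn r j} - S j) = qn r j - card (S j)"
      using S[of j] by (simp add: card_Diff_subset finite_subset)
    then show ?thesis
      using card_S[of j] qn_gt_0[of j] unfolding S'_def p_def by (simp add: diff_divide_distrib)
  qed
  have "X j \<omega> \<in> (\<Union>k\<in>S' j. Icell r j k)"
    if \<omega>: "\<omega> \<in> space M" and avoid: "\<forall>j\<ge>N. X j \<omega> \<notin> (\<Union>k\<in>S j. Icell r j k)" for j \<omega>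
  proof -
    obtain k where k: "k < qn r j" "X j \<omega> \<in> Icell r j k"
      by (rule Icell_cover[OF X_in_torus[OF \<omega>] qn_gt_0])
    moreover have "N \<le> j \<Longrightarrow> k \<notin> S j"
      using avoid k(2) by blast
    ultimately show ?thesis
      unfolding S'_def by auto
  qed
  then have "prob {\<omega> \<in> space M. \<forall>j\<ge>N. X j \<omega> \<notin> (\<Union>k\<in>S j. Icell r j k)}
      \<le> prob {\<omega> \<in> space M. \<forall>j\<le>m. X j \<omega> \<in> (\<Union>k\<in>S' j. Icell r j k)}"
    by (intro finite_measure_mono) auto
  also have "\<dots> \<le> Theta_real * (\<Prod>j\<le>m. 1 - p j)"
    using prob_all_in_cell_unions_le[of S' m] unfolding ratio by (auto simp: S'_def)
  also have "\<dots> \<le> Theta_real * exp (- (\<Sum>j\<le>m. p j))"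
    using qn_gt_0 card_S Theta_real_nonneg
    by (intro mult_left_mono prod_one_minus_le_exp_neg_sum) (auto simp: p_def)
  finally show ?thesis .
qed

lemma AE_frequently_in_cell_unions:
  assumes S: "\<And>j. S j \<subseteq> {..<qn r j}"
    and diverge: "\<not> summable (\<lambda>j. real (card (S j)) / real (qn r j))"
  shows "AE \<omega> in M. \<exists>\<^sub>\<infinity>j. X j \<omega> \<in> (\<Union>k\<in>S j. Icell r j k)"
  unfolding INFM_nat_le AE_all_countable
proof
  fix N
  define p where "p j = (if N \<le> j then real (card (S j)) / real (qn r j) else 0)" for j
  define Miss where "Miss = {\<omega> \<in> space M. \<forall>j\<ge>N. X j \<omega> \<notin> (\<Union>k\<in>S j. Icell r j k)}"
  have "eventually (\<lambda>j. p j = real (card (S j)) / real (qn r j)) sequentially"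
    unfolding p_def eventually_sequentially by auto
  then have "\<not> summable p"
    using diverge by (simp add: summable_cong)
  then have "((\<lambda>m. Theta_real * exp (- (\<Sum>j\<le>m. p j))) \<longlongrightarrow> 0) sequentially"
    using not_summable_nonneg_imp_sum_at_top[of p] unfolding p_def
    by (intro tendsto_mult_right_zero filterlim_compose[OF exp_at_bot]
        filterlim_compose[OF filterlim_uminus_at_bot_at_top]) auto
  then have "prob Miss \<le> 0"
    by (rule LIMSEQ_le_const) (use prob_avoid_cell_unions_le[OF S] in \<open>auto simp: Miss_def p_def\<close>)
  moreover have "Miss \<in> sets M"
    unfolding Miss_def by measurable
  ultimately have "Miss \<in> null_sets M"
    using measure_nonneg[of M Miss] by (simp add: null_sets_def emeasure_eq_measure)
  then show "AE \<omega> in M. \<exists>j\<ge>N. X j \<omega> \<in> (\<Union>k\<in>S j. Icell r j k)"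
    by (rule AE_I') (auto simp: Miss_def)
qed

lemma AE_frequently_near:
  assumes g: "gauge_fun g" and "0 < \<delta>" and K: "K \<subseteq> torus" and pos: "0 < hausdorff_pre g \<delta> K"
    and diverge: "(\<Sum>n. ennreal (r n / g (r n))) = \<infinity>"
  shows "AE \<omega> in M. \<exists>\<^sub>\<infinity>n. \<exists>z\<in>K. torus_dist z (X n \<omega>) < r n"
proof -
  have "AE \<omega> in M. \<exists>\<^sub>\<infinity>n. X n \<omega> \<in> (\<Union>k\<in>cells_meeting r n K. Icell r n k)"
    using not_summable_card_cells_meeting[OF assms(1-4) r_pos r_le_1 diverge]
    by (intro AE_frequently_in_cell_unions) (auto simp: cells_meeting_def)
  then show ?thesis
  proof (rule eventually_mono)
    fix \<omega> assume "\<exists>\<^sub>\<infinity>n. X n \<omega> \<in> (\<Union>k\<in>cells_meeting r n K. Icell r n k)"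
    then show "\<exists>\<^sub>\<infinity>n. \<exists>z\<in>K. torus_dist z (X n \<omega>) < r n"
    proof (rule INFM_mono)
      fix n assume "X n \<omega> \<in> (\<Union>k\<in>cells_meeting r n K. Icell r n k)"
      then obtain k z where "z \<in> K" "z \<in> Icell r n k" "X n \<omega> \<in> Icell r n k"
        unfolding cells_meeting_def by blast
      then have "torus_dist z (X n \<omega>) < 1 / real (qn r n)"
        by (intro torus_dist_Icell_less)
      also have "\<dots> \<le> r n"
        using inverse_qn_le[of r n] r_pos r_le_1 by blast
      finally show "\<exists>z\<in>K. torus_dist z (X n \<omega>) < r n"
        using \<open>z \<in> K\<close> by blast
    qed
  qed
qed

end

section \<open>Nested balls\<close>

context Metric_space
begin

lemma compactin_nested_balls_limit:
  assumes G: "compactin mtopology G" "range y \<subseteq> G"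
    and nested: "\<And>i. d (y i) (y (Suc i)) + s (Suc i) \<le> s i" and s: "\<And>i. 0 \<le> s i"
  obtains \<xi> where "\<xi> \<in> G" "\<And>i. d \<xi> (y i) \<le> s i"
proof -
  have y: "y i \<in> M" for i
    using G compactin_subset_topspace by fastforce
  have chain: "d (y i) (y k) + s k \<le> s i" if "i \<le> k" for i k
    using that
  proof (induction k rule: dec_induct)
    case (step k)
    then show ?case
      using triangle[OF y[of i] y[of k] y[of "Suc k"]] nested[of k] by linarith
  qed (simp add: y)
  obtain \<xi> \<phi> where \<xi>: "\<xi> \<in> G" "strict_mono \<phi>" "limitin mtopology (y \<circ> \<phi>) \<xi> sequentially"
    using G unfolding compactin_sequentially by blast
  then have "\<xi> \<in> M"
    using G compactin_subset_topspace by fastforce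
  have "d \<xi> (y i) \<le> s i" for i
  proof (rule field_le_epsilon)
    fix e :: real assume "0 < e"
    then obtain N where N: "\<And>k. N \<le> k \<Longrightarrow> d (y (\<phi> k)) \<xi> < e"
      using \<xi>(3) unfolding limit_metric_sequentially comp_def by blast
    define k where "k = max N i"
    have "i \<le> \<phi> k"
      using seq_suble[OF \<xi>(2), of k] unfolding k_def by linarith
    have "d \<xi> (y i) \<le> d \<xi> (y (\<phi> k)) + d (y (\<phi> k)) (y i)"
      using triangle \<open>\<xi> \<in> M\<close> y by blast
    also have "\<dots> \<le> e + s i"
      using N[of k] chain[OF \<open>i \<le> \<phi> k\<close>] s[of "\<phi> k"] commute[of \<xi>] commute[of "y i"]
      unfolding k_def by fastforce
    finally show "d \<xi> (y i) \<le> s i + e"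
      by simp
  qed
  with \<xi>(1) show ?thesis
    using that by blast
qed

end

text \<open>A countable family of balls, so that the almost sure hitting statements for all of them
  can be intersected.\<close>

definition grid_cball :: "nat \<Rightarrow> nat \<Rightarrow> real set" where
  "grid_cball m j = torus.mcball (real j / real (Suc m)) (1 / real (Suc m))"

lemma hausdorff_support_grid_cball_pos:
  assumes g: "gauge_fun g" and \<delta>: "0 \<le> \<delta>" and G: "G \<subseteq> torus"
    and y: "y \<in> hausdorff_support g \<delta> G"
  obtains j where "torus_dist (real j / real (Suc m)) y < 1 / real (Suc m)"
    and "0 < hausdorff_pre g \<delta> (hausdorff_support g \<delta> G \<inter> grid_cball m j)"
proof -
  define S where "S = hausdorff_support g \<delta> G"
  define c h where "c j = real j / real (Suc m)" and "h = 1 / real (Suc m)" for j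
  have "y \<in> torus"
    using y G unfolding hausdorff_support_def by auto
  then obtain j where c: "c j \<in> torus" and cy: "torus_dist (c j) y < h"
    using torus_grid_approx unfolding c_def h_def by blast
  define \<epsilon> where "\<epsilon> = h - torus_dist (c j) y"
  have "0 < \<epsilon>"
    using cy unfolding \<epsilon>_def by simp
  have "torus.mball y \<epsilon> \<subseteq> grid_cball m j"
    using c cy \<open>y \<in> torus\<close> torus.mball_subset_mcball[of y \<epsilon>]
      torus.mcball_subset[of y "c j" \<epsilon> h]
    unfolding grid_cball_def c_def h_def \<epsilon>_def by (simp add: torus_dist_commute)
  have "0 < hausdorff_pre g \<delta> (G \<inter> torus.mball y \<epsilon>)"
    using y \<open>0 < \<epsilon>\<close> unfolding hausdorff_support_def by blast
  also have "\<dots> \<le> hausdorff_pre g \<delta> (G \<inter> torus.mball y \<epsilon> \<inter> S)"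
    unfolding S_def using g \<delta> G by (intro hausdorff_pre_le_inter_support) auto
  also have "\<dots> \<le> hausdorff_pre g \<delta> (S \<inter> grid_cball m j)"
    using \<open>torus.mball y \<epsilon> \<subseteq> grid_cball m j\<close> by (intro hausdorff_pre_mono) blast
  finally show ?thesis
    using that cy unfolding S_def c_def h_def by blast
qed

context
  fixes g :: "real \<Rightarrow> real" and \<delta> :: real and G :: "real set" and x r :: "nat \<Rightarrow> real"
  assumes g: "gauge_fun g" and \<delta>: "0 \<le> \<delta>" and G: "G \<subseteq> torus"
    and hits: "\<And>m j. 0 < hausdorff_pre g \<delta> (hausdorff_support g \<delta> G \<inter> grid_cball m j) \<Longrightarrow>
      \<exists>\<^sub>\<infinity>n. \<exists>z\<in>hausdorff_support g \<delta> G \<inter> grid_cball m j. torus_dist z (x n) < r n"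
begin

lemma support_hit_step:
  assumes y: "y \<in> hausdorff_support g \<delta> G" and "0 < s"
  shows "\<exists>y' s' n'. N < n' \<and> y' \<in> hausdorff_support g \<delta> G \<and> 0 < s' \<and>
    torus_dist y y' + s' \<le> s \<and> torus_dist y' (x n') + s' < r n'"
proof -
  define S where "S = hausdorff_support g \<delta> G"
  obtain m where m: "inverse (real (Suc m)) < s / 4"
    using reals_Archimedean[of "s / 4"] \<open>0 < s\<close> by auto
  define h where "h = 1 / real (Suc m)"
  obtain j where cy: "torus_dist (real j / real (Suc m)) y < h"
    and pos: "0 < hausdorff_pre g \<delta> (S \<inter> grid_cball m j)"
    using hausdorff_support_grid_cball_pos[OF g \<delta> G y] unfolding S_def h_def by blast
  have "\<exists>\<^sub>\<infinity>n. \<exists>z\<in>S \<inter> grid_cball m j. torus_dist z (x n) < r n"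
    using pos unfolding S_def by (rule hits)
  then obtain n' z where "N < n'" "z \<in> S" "z \<in> grid_cball m j" and hit: "torus_dist z (x n') < r n'"
    unfolding INFM_nat by blast
  then have "torus_dist (real j / real (Suc m)) z \<le> h"
    unfolding grid_cball_def h_def by simp
  then have yz: "torus_dist y z < 2 * h"
    using cy torus_dist_triangle[of y z "real j / real (Suc m)"]
      torus_dist_commute[of y "real j / real (Suc m)"]
    by linarith
  define s' where "s' = min (s / 4) ((r n' - torus_dist z (x n')) / 2)"
  have s': "s' \<le> s / 4" "s' \<le> (r n' - torus_dist z (x n')) / 2"
    unfolding s'_def by (rule min.cobounded1, rule min.cobounded2)
  have "0 < s'"
    unfolding s'_def using \<open>0 < s\<close> hit by simp
  moreover have "torus_dist y z + s' \<le> s"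
    using yz m s'(1) \<open>0 < s\<close> unfolding h_def inverse_eq_divide by linarith
  moreover have "torus_dist z (x n') + s' < r n'"
    using hit s'(2) by argo
  ultimately show ?thesis
    using \<open>N < n'\<close> \<open>z \<in> S\<close> unfolding S_def by blast
qed

lemma Eset_inter_nonempty:
  assumes G_cpt: "compactin torus_top G" and pos: "0 < hausdorff_pre g \<delta> G"
  shows "Eset x r \<inter> G \<noteq> {}"
proof -
  define S where "S = hausdorff_support g \<delta> G"
  have "0 < hausdorff_pre g \<delta> (G \<inter> S)"
    using pos hausdorff_pre_le_inter_support[OF g \<delta> G, of G] unfolding S_def by simp
  then obtain y0 where "y0 \<in> S"
    using g \<delta> by (metis disjoint_iff hausdorff_pre_empty order.irrefl)
  \<comment> \<open>States \<open>(y, s, n)\<close>: the ball of radius \<open>s\<close> about \<open>y\<close> lies in the previous ball and in the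
    \<open>r n\<close>-ball about \<open>x n\<close>.\<close>
  define P where "P i = (\<lambda>(y, s :: real, _ :: nat). y \<in> S \<and> 0 < s)" for i :: nat
  define Q where "Q i = (\<lambda>(y, s, n :: nat) (y', s', n'). n < n' \<and> torus_dist y y' + s' \<le> s \<and>
    torus_dist y' (x n') + s' < r n')" for i :: nat
  have "\<exists>f. \<forall>i. P i (f i) \<and> Q i (f i) (f (Suc i))"
  proof (rule dependent_nat_choice)
    show "\<exists>st. P 0 st"
      using \<open>y0 \<in> S\<close> unfolding P_def by (intro exI[of _ "(y0, 1, 0)"]) simp
  next
    fix st i assume "P i st"
    then obtain y s n where "st = (y, s, n)" "y \<in> S" "0 < s"
      unfolding P_def by (cases st) auto
    then show "\<exists>st'. P (Suc i) st' \<and> Q i st st'"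
      using support_hit_step[of y s n] unfolding P_def Q_def S_def by auto
  qed
  then obtain f where f: "\<And>i. P i (f i)" "\<And>i. Q i (f i) (f (Suc i))"
    by blast
  define y where "y i = fst (f i)" for i
  define s where "s i = fst (snd (f i))" for i
  define n where "n i = snd (snd (f i))" for i
  have yS: "y i \<in> S" and "0 < s i" for i
    using f(1)[of i] unfolding P_def y_def s_def by (auto split: prod.splits)
  have "n i < n (Suc i)" and nested: "torus_dist (y i) (y (Suc i)) + s (Suc i) \<le> s i"
    and near: "torus_dist (y (Suc i)) (x (n (Suc i))) + s (Suc i) < r (n (Suc i))" for i
    using f(2)[of i] unfolding Q_def y_def s_def n_def by (auto split: prod.splits)
  have "range y \<subseteq> G"
    using yS unfolding S_def hausdorff_support_def by auto
  then obtain \<xi> where "\<xi> \<in> G" and close: "\<And>i. torus_dist \<xi> (y i) \<le> s i"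
    using torus.compactin_nested_balls_limit[of G y s] G_cpt nested \<open>\<And>i. 0 < s i\<close>
    unfolding torus_top_def by (metis less_imp_le)
  have "torus_dist \<xi> (x (n (Suc i))) < r (n (Suc i))" for i
    using torus_dist_triangle[of \<xi> "x (n (Suc i))" "y (Suc i)"] close[of "Suc i"] near[of i]
    by linarith
  moreover have "strict_mono n"
    by (rule strict_monoI_Suc) fact
  ultimately have "\<exists>\<^sub>\<infinity>k. torus_dist \<xi> (x k) < r k"
    unfolding INFM_nat by (metis Suc_le_lessD seq_suble)
  then show ?thesis
    using \<open>\<xi> \<in> G\<close> G unfolding Eset_def by blast
qed

end

theorem theorem3p2:
  fixes M :: "'a measure" and X :: "nat \<Rightarrow> 'a \<Rightarrow> real" and r :: "nat \<Rightarrow> real"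
    and G :: "real set" and g :: "real \<Rightarrow> real"
  assumes "prob_space M"
    and X_meas: "\<And>n. X n \<in> borel_measurable M"
    and X_in: "\<And>n \<omega>. \<omega> \<in> space M \<Longrightarrow> X n \<omega> \<in> torus"
    and X_distr: "\<And>n. distr M lborel (X n) = uniform_measure lborel torus"
    and r_pos: "\<And>n. 0 < r n" and r_le: "\<And>n. r n \<le> 1"
    and G_sub: "G \<subseteq> torus" and G_ne: "G \<noteq> {}" and G_cpt: "compactin torus_top G"
    and g: "gauge_fun g" and HG: "hausdorff_measure g G > 0"
    and Theta_fin: "Theta M X (Bcal r) < \<infinity>"
    and div: "(\<Sum>n. ennreal (r n / g (r n))) = \<infinity>"
  shows "AE \<omega> in M. Eset (\<lambda>n. X n \<omega>) r \<inter> G \<noteq> {}"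
proof -
  interpret uniform_torus_sequence M X r
    using assms by (simp add: uniform_torus_sequence_def uniform_torus_sequence_axioms_def)
  obtain \<delta> where "0 < \<delta>" and pos: "0 < hausdorff_pre g \<delta> G"
    using HG unfolding hausdorff_measure_def less_SUP_iff by auto
  define S where "S = hausdorff_support g \<delta> G"
  have "S \<subseteq> torus"
    using G_sub unfolding S_def hausdorff_support_def by auto
  have "AE \<omega> in M. \<forall>m j. 0 < hausdorff_pre g \<delta> (S \<inter> grid_cball m j) \<longrightarrow>
      (\<exists>\<^sub>\<infinity>n. \<exists>z\<in>S \<inter> grid_cball m j. torus_dist z (X n \<omega>) < r n)"
    unfolding AE_all_countable
    using \<open>S \<subseteq> torus\<close> by (auto intro!: AE_impI AE_frequently_near[OF g \<open>0 < \<delta>\<close> _ _ div])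
  then show ?thesis
    by (rule eventually_mono)
      (use Eset_inter_nonempty[OF g _ G_sub _ G_cpt pos] \<open>0 < \<delta>\<close> in \<open>auto simp: S_def\<close>)
qed

end
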